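(* Let $\mathcal{F}$ be a class of maps satisfying: (i) $\mathcal{F}(Y,Y)$ contains the identity map for every Banach space $Y$; (ii) $\mathcal{F}(Y,Z)$ is a vector space for all Banach spaces $Y,Z$; (iii) if $A\colon Y\to U$ and $B\colon V\to Z$ are affine maps and $F\in\mathcal{F}(U,V)$, then $B\circ F\circ A\in\mathcal{F}(Y,Z)$. Then an affine equivariant integrator map $\phi$ is $\mathcal{F}$-invariant preserving if and only if it is $\mathcal{F}$-functionally equivariant.
   Context: All spaces are real Banach spaces; $\mathfrak{X}(Y)$ denotes the smooth vector fields on $Y$. A class of maps $\mathcal F$ assigns to each pair of Banach spaces $Y,Z$ a set $\mathcal F(Y,Z)$ of Gâteaux differentiable maps $Y\to Z$. An integrator map $\phi$ is a collection of smooth maps $\phi_Y\colon\mathfrak{X}(Y)\to\mathfrak{X}(Y)$, one for each Banach space $Y$; write $\phi(f)$. For Gâteaux differentiable $\chi\colon Y\to U$, $f\sim_\chi g$ means $\chi'(y)f(y)=g(\chi(y))$ for all $y$. $\phi$ is affine equivariant if for every affine $A\colon Y\to U$ between Banach spaces, $f\sim_A g$ implies $\phi(f)\sim_A\phi(g)$. Given $F\colon Y\to Z$ and $f\in\mathfrak X(Y)$, the augmented vector field is $g\in\mathfrak X(Y\times Z)$, $g(y,z)=(f(y),F'(y)f(y))$; $\phi$ is $F$-functionally equivariant if $\phi(f)\sim_{(\mathrm{id},F)}\phi(g)$ for all $f\in\mathfrak X(Y)$, where $(\mathrm{id},F)(y)=(y,F(y))$. $\phi$ is $F$-invariant preserving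 if for all $f\in\mathfrak X(Y)$, $F'f=0$ (i.e. $F'(y)f(y)=0$ for all $y$) implies $F'\phi(f)=0$. $\phi$ is $\mathcal F$-functionally equivariant (resp. $\mathcal F$-invariant preserving) if it is $F$-functionally equivariant (resp. $F$-invariant preserving) for all $F\in\mathcal F(Y,Z)$ and all Banach spaces $Y,Z$. *)

theory Defs
  imports "HOL-Analysis.Analysis"
begin

definition dquot :: "('a::real_normed_vector \<Rightarrow> 'b::real_normed_vector) \<Rightarrow> 'a \<Rightarrow> 'a \<Rightarrow> real \<Rightarrow> 'b" where
  "dquot F y v = (\<lambda>t. inverse t *\<^sub>R (F (y + t *\<^sub>R v) - F y))"

definition gderiv :: "('a::real_normed_vector \<Rightarrow> 'b::real_normed_vector) \<Rightarrow> 'a \<Rightarrow> 'a \<Rightarrow> 'b" where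
  "gderiv F y v = Lim (at (0::real)) (dquot F y v)"

definition gateaux_differentiable :: "('a::real_normed_vector \<Rightarrow> 'b::real_normed_vector) \<Rightarrow> bool" where
  "gateaux_differentiable F \<longleftrightarrow>
     (\<forall>y. \<exists>L. bounded_linear L \<and> (\<forall>v. (dquot F y v \<longlongrightarrow> L v) (at 0)))"

section \<open>Smooth maps (Bastiani C-infinity; equals Frechet C-infinity on Banach spaces)\<close>

fun iter_dd :: "('a::real_normed_vector \<Rightarrow> 'b::real_normed_vector) \<Rightarrow> 'a list \<Rightarrow> 'a \<Rightarrow> 'b" where
  "iter_dd f [] = f"
| "iter_dd f (v # vs) = (\<lambda>x. gderiv (iter_dd f vs) x v)"

definition smooth :: "('a::real_normed_vector \<Rightarrow> 'b::real_normed_vector) \<Rightarrow> bool" where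
  "smooth f \<longleftrightarrow>
     (\<forall>vs x v. (dquot (iter_dd f vs) x v \<longlongrightarrow> iter_dd f (v # vs) x) (at 0)) \<and>
     (\<forall>k vs x X V. length vs = k \<and> (\<forall>n. length (V n) = k) \<and> X \<longlonglongrightarrow> x \<and>
        (\<forall>i<k. (\<lambda>n. V n ! i) \<longlonglongrightarrow> vs ! i)
        \<longrightarrow> (\<lambda>n. iter_dd f (V n) (X n)) \<longlonglongrightarrow> iter_dd f vs x)"

definition vfields :: "('a::real_normed_vector \<Rightarrow> 'a) set" where
  "vfields = {f. smooth f}"

definition caffine :: "('a::real_normed_vector \<Rightarrow> 'b::real_normed_vector) \<Rightarrow> bool" where
  "caffine A \<longleftrightarrow> (\<exists>L c. bounded_linear L \<and> (\<forall>y. A y = L y + c))"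

definition related :: "('a::real_normed_vector \<Rightarrow> 'b::real_normed_vector) \<Rightarrow> ('a \<Rightarrow> 'a) \<Rightarrow> ('b \<Rightarrow> 'b) \<Rightarrow> bool" where
  "related h f g \<longleftrightarrow> (\<forall>y. gderiv h y (f y) = g (h y))"

definition integrator_comp :: "(('a::real_normed_vector \<Rightarrow> 'a) \<Rightarrow> ('a \<Rightarrow> 'a)) \<Rightarrow> bool" where
  "integrator_comp \<phi> \<longleftrightarrow> (\<forall>f\<in>vfields. \<phi> f \<in> vfields)"

definition aff_equiv :: "(('a::real_normed_vector \<Rightarrow> 'a) \<Rightarrow> ('a \<Rightarrow> 'a)) \<Rightarrow>
     (('b::real_normed_vector \<Rightarrow> 'b) \<Rightarrow> ('b \<Rightarrow> 'b)) \<Rightarrow> bool" where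
  "aff_equiv \<phi>Y \<phi>U \<longleftrightarrow>
     (\<forall>(A::'a \<Rightarrow> 'b) f g. caffine A \<and> f \<in> vfields \<and> g \<in> vfields \<and> related A f g
        \<longrightarrow> related A (\<phi>Y f) (\<phi>U g))"

definition augmented :: "('a::real_normed_vector \<Rightarrow> 'b::real_normed_vector) \<Rightarrow> ('a \<Rightarrow> 'a) \<Rightarrow> ('a \<times> 'b \<Rightarrow> 'a \<times> 'b)" where
  "augmented F f = (\<lambda>(y, z). (f y, gderiv F y (f y)))"

text \<open>F-functional equivariance (quantifying over those f whose augmented field is a
  smooth vector field, as is implicit in the paper).\<close>
definition func_equiv :: "(('a::real_normed_vector \<Rightarrow> 'a) \<Rightarrow> ('a \<Rightarrow> 'a)) \<Rightarrow>
     (('a \<times> 'b \<Rightarrow> 'a \<times> 'b) \<Rightarrow> ('a \<times> 'b \<Rightarrow> 'a \<times> 'b)) \<Rightarrow> ('a \<Rightarrow> 'b::real_normed_vector) \<Rightarrow> bool" where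
  "func_equiv \<phi>Y \<phi>YZ F \<longleftrightarrow>
     (\<forall>f\<in>vfields. augmented F f \<in> vfields \<longrightarrow>
        related (\<lambda>y. (y, F y)) (\<phi>Y f) (\<phi>YZ (augmented F f)))"

definition inv_pres :: "(('a::real_normed_vector \<Rightarrow> 'a) \<Rightarrow> ('a \<Rightarrow> 'a)) \<Rightarrow> ('a \<Rightarrow> 'b::real_normed_vector) \<Rightarrow> bool" where
  "inv_pres \<phi> F \<longleftrightarrow>
     (\<forall>f\<in>vfields. (\<forall>y. gderiv F y (f y) = 0) \<longrightarrow> (\<forall>y. gderiv F y (\<phi> f y) = 0))"

text \<open>One component F(Y,Z) of a class of maps: Gateaux differentiable maps forming a vector space.\<close>
definition map_class_vs :: "('a::real_normed_vector \<Rightarrow> 'b::real_normed_vector) set \<Rightarrow> bool" where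
  "map_class_vs C \<longleftrightarrow>
     (\<forall>F\<in>C. gateaux_differentiable F) \<and> (\<lambda>x. 0) \<in> C \<and>
     (\<forall>F\<in>C. \<forall>G\<in>C. (\<lambda>x. F x + G x) \<in> C) \<and>
     (\<forall>c. \<forall>F\<in>C. (\<lambda>x. c *\<^sub>R F x) \<in> C)"

text \<open>Condition (iii) for one triple: B o F o A in C(Y,Z) for F in C(U,V), A, B affine.\<close>
definition affine_closed :: "('u::real_normed_vector \<Rightarrow> 'v::real_normed_vector) set \<Rightarrow>
     ('y::real_normed_vector \<Rightarrow> 'z::real_normed_vector) set \<Rightarrow> bool" where
  "affine_closed CUV CYZ \<longleftrightarrow>
     (\<forall>(A::'y \<Rightarrow> 'u) (B::'v \<Rightarrow> 'z) F. caffine A \<and> caffine B \<and> F \<in> CUV \<longrightarrow> B \<circ> F \<circ> A \<in> CYZ)"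

end

theory Submission
  imports Defs
begin

text \<open>For F in the class, G(y,z) = z - F(y) is again in the class, and it is a first
  integral of the augmented field g = (f, F'f). Invariant preservation for G forces the
  second component of phi(g) on the graph of F to be F' applied to the first one, which
  by affine equivariance under the projection (y,z) \<mapsto> y is phi(f): this is functional
  equivariance. Conversely, if F'f = 0 then g = (f, 0) projects under (y,z) \<mapsto> z to the
  zero field, which every affine equivariant phi fixes (equivariance under translations
  makes phi(0) constant, under z \<mapsto> 2z this constant vanishes); so phi(g) has zero second
  component, and functional equivariance turns this into F' phi(f) = 0.\<close>

lemma gderiv_eqI: "(dquot F y v \<longlongrightarrow> l) (at 0) \<Longrightarrow> gderiv F y v = l"
  unfolding gderiv_def by (rule tendsto_Lim) (simp_all add: trivial_limit_at)

lemma gateaux_differentiable_tendsto: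
  assumes "gateaux_differentiable F"
  shows "(dquot F y v \<longlongrightarrow> gderiv F y v) (at 0)"
proof -
  from assms obtain L where "\<forall>v. (dquot F y v \<longlongrightarrow> L v) (at 0)"
    unfolding gateaux_differentiable_def by blast
  then show ?thesis using gderiv_eqI by metis
qed

lemma eventually_at_zero_nonzero: "\<forall>\<^sub>F t in at (0::real). t \<noteq> 0"
  by (simp add: eventually_at_filter)

lemma gderiv_affine:
  assumes "bounded_linear L"
  shows "gderiv (\<lambda>y. L y + c) y v = L v"
proof (rule gderiv_eqI)
  interpret bounded_linear L by fact
  have "\<forall>\<^sub>F t in at (0::real). L v = dquot (\<lambda>y. L y + c) y v t"
    using eventually_at_zero_nonzero by eventually_elim (simp add: dquot_def add scaleR)
  then show "(dquot (\<lambda>y. L y + c) y v \<longlongrightarrow> L v) (at 0)"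
    by (rule Lim_transform_eventually[OF tendsto_const])
qed

lemma gderiv_bounded_linear: "bounded_linear L \<Longrightarrow> gderiv L y v = L v"
  using gderiv_affine[of L 0 y v] by simp

lemma gderiv_graph:
  assumes "gateaux_differentiable F"
  shows "gderiv (\<lambda>y. (y, F y)) y v = (v, gderiv F y v)"
proof (rule gderiv_eqI)
  have "((\<lambda>t. (v, dquot F y v t)) \<longlongrightarrow> (v, gderiv F y v)) (at 0)"
    by (intro tendsto_Pair tendsto_const gateaux_differentiable_tendsto assms)
  moreover have "\<forall>\<^sub>F t in at (0::real). (v, dquot F y v t) = dquot (\<lambda>y. (y, F y)) y v t"
    using eventually_at_zero_nonzero by eventually_elim (simp add: dquot_def)
  ultimately show "(dquot (\<lambda>y. (y, F y)) y v \<longlongrightarrow> (v, gderiv F y v)) (at 0)"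
    by (rule Lim_transform_eventually)
qed

lemma gderiv_snd_minus_comp_fst:
  assumes "gateaux_differentiable F"
  shows "gderiv (\<lambda>p. snd p - F (fst p)) (y, z) (v, w) = w - gderiv F y v"
proof (rule gderiv_eqI)
  have "((\<lambda>t. w - dquot F y v t) \<longlongrightarrow> w - gderiv F y v) (at 0)"
    by (intro tendsto_diff tendsto_const gateaux_differentiable_tendsto assms)
  moreover have "\<forall>\<^sub>F t in at (0::real).
      w - dquot F y v t = dquot (\<lambda>p. snd p - F (fst p)) (y, z) (v, w) t"
    using eventually_at_zero_nonzero by eventually_elim (simp add: dquot_def algebra_simps)
  ultimately show "(dquot (\<lambda>p. snd p - F (fst p)) (y, z) (v, w) \<longlongrightarrow> w - gderiv F y v) (at 0)"
    by (rule Lim_transform_eventually)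
qed

lemma caffine_bounded_linear: "bounded_linear L \<Longrightarrow> caffine L"
  unfolding caffine_def by (rule exI[of _ L], rule exI[of _ 0]) simp

lemma caffine_translation: "caffine (\<lambda>z. z + w)"
  unfolding caffine_def by (rule exI[of _ "\<lambda>x. x"]) (auto intro: bounded_linear_ident)

lemma related_bounded_linear_iff:
  "bounded_linear L \<Longrightarrow> related L f g \<longleftrightarrow> (\<forall>y. L (f y) = g (L y))"
  by (simp add: related_def gderiv_bounded_linear)

lemma related_graph_iff:
  assumes "gateaux_differentiable F"
  shows "related (\<lambda>y. (y, F y)) f h \<longleftrightarrow> (\<forall>y. h (y, F y) = (f y, gderiv F y (f y)))"
  unfolding related_def gderiv_graph[OF assms] by (simp add: eq_commute)

lemma iter_dd_zero: "iter_dd (\<lambda>z::'a::real_normed_vector. 0::'b::real_normed_vector) vs = (\<lambda>z. 0)"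
proof (induction vs)
  case (Cons v vs)
  have "gderiv (\<lambda>z::'a. 0::'b) x v = 0" for x
    by (rule gderiv_eqI) (simp add: dquot_def)
  then show ?case using Cons by simp
qed simp

lemma smooth_zero: "smooth (\<lambda>z::'a::real_normed_vector. 0::'b::real_normed_vector)"
  unfolding smooth_def iter_dd_zero by (simp add: dquot_def)

lemma zero_field_in_vfields: "(\<lambda>z. 0) \<in> vfields"
  unfolding vfields_def using smooth_zero by simp

lemma dquot_lift_fst:
  "dquot (\<lambda>p. (f (fst p), 0::'b::real_normed_vector)) p u = (\<lambda>t. (dquot f (fst p) (fst u) t, 0))"
  by (rule ext) (simp add: dquot_def)

lemma tendsto_dquot_lift_fst:
  assumes "smooth f"
  shows "(dquot (\<lambda>p. (iter_dd f vs (fst p), 0::'b::real_normed_vector)) p u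
      \<longlongrightarrow> (iter_dd f (fst u # vs) (fst p), 0)) (at 0)"
  unfolding dquot_lift_fst using assms unfolding smooth_def
  by (intro tendsto_Pair tendsto_const) blast

lemma iter_dd_lift_fst:
  assumes "smooth f"
  shows "iter_dd (\<lambda>p::'a::real_normed_vector \<times> 'b::real_normed_vector. (f (fst p), 0::'b)) vs
       = (\<lambda>p. (iter_dd f (map fst vs) (fst p), 0))"
proof (induction vs)
  case (Cons u vs)
  have "gderiv (\<lambda>p. (iter_dd f (map fst vs) (fst p), 0::'b)) p u
      = (iter_dd f (fst u # map fst vs) (fst p), 0)" for p
    by (rule gderiv_eqI tendsto_dquot_lift_fst[OF assms])+
  then show ?case using Cons by simp
qed simp

lemma smooth_lift_fst:
  assumes "smooth f"
  shows "smooth (\<lambda>p::'a::real_normed_vector \<times> 'b::real_normed_vector. (f (fst p), 0::'b))"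
  unfolding smooth_def iter_dd_lift_fst[OF assms]
proof (intro conjI allI impI)
  fix vs :: "('a \<times> 'b) list" and x v :: "'a \<times> 'b"
  show "(dquot (\<lambda>p. (iter_dd f (map fst vs) (fst p), 0::'b)) x v
      \<longlongrightarrow> (iter_dd f (map fst (v # vs)) (fst x), 0)) (at 0)"
    using tendsto_dquot_lift_fst[OF assms] by simp
next
  fix k and vs :: "('a \<times> 'b) list" and x :: "'a \<times> 'b" and X V
  assume conv: "length vs = k \<and> (\<forall>n. length (V n) = k) \<and> X \<longlonglongrightarrow> x
    \<and> (\<forall>i<k. (\<lambda>n. V n ! i) \<longlonglongrightarrow> vs ! i)"
  have "(\<lambda>n. map fst (V n) ! i) \<longlonglongrightarrow> map fst vs ! i" if "i < k" for i
    using conv that tendsto_fst[of "\<lambda>n. V n ! i"] by simp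
  moreover have "(\<lambda>n. fst (X n)) \<longlonglongrightarrow> fst x"
    using conv by (intro tendsto_fst) blast
  moreover have "\<And>k (us::'a list) u U W. length us = k \<Longrightarrow> (\<forall>n. length (W n) = k) \<Longrightarrow>
      U \<longlonglongrightarrow> u \<Longrightarrow> (\<forall>i<k. (\<lambda>n. W n ! i) \<longlonglongrightarrow> us ! i) \<Longrightarrow>
      (\<lambda>n. iter_dd f (W n) (U n)) \<longlonglongrightarrow> iter_dd f us u"
    using assms unfolding smooth_def by blast
  ultimately have "(\<lambda>n. iter_dd f (map fst (V n)) (fst (X n))) \<longlonglongrightarrow> iter_dd f (map fst vs) (fst x)"
    using conv by simp
  then show "(\<lambda>n. (iter_dd f (map fst (V n)) (fst (X n)), 0::'b))
      \<longlonglongrightarrow> (iter_dd f (map fst vs) (fst x), 0)"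
    by (intro tendsto_Pair tendsto_const)
qed

lemma aff_equiv_zero_field:
  fixes \<phi> :: "('a::real_normed_vector \<Rightarrow> 'a) \<Rightarrow> ('a \<Rightarrow> 'a)"
  assumes "aff_equiv \<phi> \<phi>"
  shows "\<phi> (\<lambda>z. 0) = (\<lambda>z. 0)"
proof -
  have transl: "\<phi> (\<lambda>z. 0) w = \<phi> (\<lambda>z. 0) 0" for w
  proof -
    have "related (\<lambda>z. z + w) (\<lambda>z. 0) (\<lambda>z::'a. 0)"
      unfolding related_def by (simp add: gderiv_affine[OF bounded_linear_ident])
    then have "related (\<lambda>z. z + w) (\<phi> (\<lambda>z. 0)) (\<phi> (\<lambda>z. 0))"
      using assms zero_field_in_vfields caffine_translation unfolding aff_equiv_def by blast
    then show ?thesis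
      unfolding related_def gderiv_affine[OF bounded_linear_ident] by (metis add_0)
  qed
  have dil: "bounded_linear (\<lambda>z::'a. (2::real) *\<^sub>R z)"
    by (rule bounded_linear_scaleR_right)
  then have "related (\<lambda>z::'a. (2::real) *\<^sub>R z) (\<lambda>z. 0) (\<lambda>z. 0)"
    by (simp add: related_bounded_linear_iff)
  then have "related (\<lambda>z::'a. (2::real) *\<^sub>R z) (\<phi> (\<lambda>z. 0)) (\<phi> (\<lambda>z. 0))"
    using assms zero_field_in_vfields caffine_bounded_linear[OF dil] unfolding aff_equiv_def by blast
  then have "(2::real) *\<^sub>R \<phi> (\<lambda>z. 0) 0 = \<phi> (\<lambda>z. 0) 0"
    using transl by (simp add: related_bounded_linear_iff[OF dil])
  then show ?thesis using transl by (auto simp: scaleR_2)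
qed

lemma snd_minus_comp_fst_in_class:
  fixes CYZ :: "('y::real_normed_vector \<Rightarrow> 'z::real_normed_vector) set"
    and CZZ :: "('z \<Rightarrow> 'z) set" and CPZ :: "('y \<times> 'z \<Rightarrow> 'z) set"
  assumes "map_class_vs CPZ" "affine_closed CYZ CPZ" "affine_closed CZZ CPZ"
    and "id \<in> CZZ" "F \<in> CYZ"
  shows "(\<lambda>p. snd p - F (fst p)) \<in> CPZ"
proof -
  have "id \<circ> id \<circ> snd \<in> CPZ"
    using assms(3,4) caffine_bounded_linear[OF bounded_linear_snd]
      caffine_bounded_linear[OF bounded_linear_ident]
    unfolding affine_closed_def id_def by blast
  moreover have "uminus \<circ> F \<circ> fst \<in> CPZ"
    using assms(2,5) caffine_bounded_linear[OF bounded_linear_fst]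
      caffine_bounded_linear[OF bounded_linear_minus[OF bounded_linear_ident]]
    unfolding affine_closed_def by blast
  ultimately have "(\<lambda>p. (id \<circ> id \<circ> snd) p + (uminus \<circ> F \<circ> fst) p) \<in> CPZ"
    using assms(1) unfolding map_class_vs_def by blast
  then show ?thesis by simp
qed

lemma func_equiv_if_inv_pres_snd_minus_comp_fst:
  fixes F :: "'y::real_normed_vector \<Rightarrow> 'z::real_normed_vector"
    and \<phi>Y :: "('y \<Rightarrow> 'y) \<Rightarrow> ('y \<Rightarrow> 'y)"
    and \<phi>P :: "('y \<times> 'z \<Rightarrow> 'y \<times> 'z) \<Rightarrow> ('y \<times> 'z \<Rightarrow> 'y \<times> 'z)"
  assumes F: "gateaux_differentiable F"
    and eq: "aff_equiv \<phi>P \<phi>Y"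
    and inv: "inv_pres \<phi>P (\<lambda>p. snd p - F (fst p))"
  shows "func_equiv \<phi>Y \<phi>P F"
  unfolding func_equiv_def
proof (intro ballI impI)
  fix f assume f: "f \<in> vfields" and g: "augmented F f \<in> vfields"
  define g where "g = augmented F f"
  have g_apply: "g p = (f (fst p), gderiv F (fst p) (f (fst p)))" for p
    unfolding g_def augmented_def by (simp add: case_prod_beta)
  have "related fst g f"
    by (simp add: related_bounded_linear_iff[OF bounded_linear_fst] g_apply)
  then have "related fst (\<phi>P g) (\<phi>Y f)"
    using eq f g caffine_bounded_linear[OF bounded_linear_fst] unfolding aff_equiv_def g_def by blast
  then have fst_\<phi>P: "fst (\<phi>P g p) = \<phi>Y f (fst p)" for p
    by (cases p) (simp add: related_bounded_linear_iff[OF bounded_linear_fst])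
  have "gderiv (\<lambda>p. snd p - F (fst p)) p (g p) = 0" for p
    using gderiv_snd_minus_comp_fst[OF F] by (cases p) (simp add: g_apply)
  then have "gderiv (\<lambda>p. snd p - F (fst p)) p (\<phi>P g p) = 0" for p
    using inv f g unfolding inv_pres_def g_def by blast
  then have "snd (\<phi>P g p) = gderiv F (fst p) (fst (\<phi>P g p))" for p
    using gderiv_snd_minus_comp_fst[OF F, of "fst p" "snd p" "fst (\<phi>P g p)" "snd (\<phi>P g p)"]
    by simp
  then show "related (\<lambda>y. (y, F y)) (\<phi>Y f) (\<phi>P (augmented F f))"
    unfolding related_graph_iff[OF F] g_def[symmetric] by (simp add: prod_eq_iff fst_\<phi>P)
qed

lemma inv_pres_if_func_equiv:
  fixes F :: "'y::real_normed_vector \<Rightarrow> 'z::real_normed_vector"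
    and \<phi>Y :: "('y \<Rightarrow> 'y) \<Rightarrow> ('y \<Rightarrow> 'y)"
    and \<phi>Z :: "('z \<Rightarrow> 'z) \<Rightarrow> ('z \<Rightarrow> 'z)"
    and \<phi>P :: "('y \<times> 'z \<Rightarrow> 'y \<times> 'z) \<Rightarrow> ('y \<times> 'z \<Rightarrow> 'y \<times> 'z)"
  assumes F: "gateaux_differentiable F"
    and feq: "func_equiv \<phi>Y \<phi>P F"
    and eq_snd: "aff_equiv \<phi>P \<phi>Z"
    and eq_Z: "aff_equiv \<phi>Z \<phi>Z"
  shows "inv_pres \<phi>Y F"
  unfolding inv_pres_def
proof (intro ballI impI allI)
  fix f y assume f: "f \<in> vfields" and invariant: "\<forall>y. gderiv F y (f y) = 0"
  have g_eq: "augmented F f = (\<lambda>p. (f (fst p), 0))"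
    unfolding augmented_def using invariant by (auto simp: case_prod_beta)
  then have g: "augmented F f \<in> vfields"
    using f smooth_lift_fst unfolding vfields_def by auto
  have "related snd (augmented F f) (\<lambda>z. 0)"
    unfolding g_eq by (simp add: related_bounded_linear_iff[OF bounded_linear_snd])
  then have "related snd (\<phi>P (augmented F f)) (\<phi>Z (\<lambda>z. 0))"
    using eq_snd g zero_field_in_vfields caffine_bounded_linear[OF bounded_linear_snd]
    unfolding aff_equiv_def by blast
  then have "snd (\<phi>P (augmented F f) (y, F y)) = 0"
    by (simp add: related_bounded_linear_iff[OF bounded_linear_snd] aff_equiv_zero_field[OF eq_Z])
  moreover have "related (\<lambda>y. (y, F y)) (\<phi>Y f) (\<phi>P (augmented F f))"
    using feq f g unfolding func_equiv_def by blast
  ultimately show "gderiv F y (\<phi>Y f y) = 0"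
    unfolding related_graph_iff[OF F] by simp
qed

theorem theorem2p9:
  fixes \<phi>Y :: "('y::banach \<Rightarrow> 'y) \<Rightarrow> ('y \<Rightarrow> 'y)"
    and \<phi>Z :: "('z::banach \<Rightarrow> 'z) \<Rightarrow> ('z \<Rightarrow> 'z)"
    and \<phi>P :: "('y \<times> 'z \<Rightarrow> 'y \<times> 'z) \<Rightarrow> ('y \<times> 'z \<Rightarrow> 'y \<times> 'z)"
    and CYZ :: "('y \<Rightarrow> 'z) set"
    and CZZ :: "('z \<Rightarrow> 'z) set"
    and CPZ :: "('y \<times> 'z \<Rightarrow> 'z) set"
  assumes int: "integrator_comp \<phi>Y" "integrator_comp \<phi>Z" "integrator_comp \<phi>P"
    and aeq: "aff_equiv \<phi>Y \<phi>Y" "aff_equiv \<phi>Y \<phi>Z" "aff_equiv \<phi>Y \<phi>P"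
             "aff_equiv \<phi>Z \<phi>Y" "aff_equiv \<phi>Z \<phi>Z" "aff_equiv \<phi>Z \<phi>P"
             "aff_equiv \<phi>P \<phi>Y" "aff_equiv \<phi>P \<phi>Z" "aff_equiv \<phi>P \<phi>P"
    and cls_id: "id \<in> CZZ"
    and cls_vs: "map_class_vs CYZ" "map_class_vs CZZ" "map_class_vs CPZ"
    and cls_aff: "affine_closed CYZ CYZ" "affine_closed CYZ CZZ" "affine_closed CYZ CPZ"
                 "affine_closed CZZ CYZ" "affine_closed CZZ CZZ" "affine_closed CZZ CPZ"
                 "affine_closed CPZ CYZ" "affine_closed CPZ CZZ" "affine_closed CPZ CPZ"
  shows "((\<forall>F\<in>CYZ. inv_pres \<phi>Y F) \<and> (\<forall>G\<in>CPZ. inv_pres \<phi>P G)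
            \<longrightarrow> (\<forall>F\<in>CYZ. func_equiv \<phi>Y \<phi>P F))
         \<and> ((\<forall>F\<in>CYZ. func_equiv \<phi>Y \<phi>P F) \<longrightarrow> (\<forall>F\<in>CYZ. inv_pres \<phi>Y F))"
proof -
  have F_diff: "gateaux_differentiable F" if "F \<in> CYZ" for F
    using cls_vs(1) that unfolding map_class_vs_def by blast
  have "func_equiv \<phi>Y \<phi>P F" if "F \<in> CYZ" and "\<forall>G\<in>CPZ. inv_pres \<phi>P G" for F
  proof (rule func_equiv_if_inv_pres_snd_minus_comp_fst[OF F_diff[OF that(1)] aeq(7)])
    show "inv_pres \<phi>P (\<lambda>p. snd p - F (fst p))"
      using that snd_minus_comp_fst_in_class[OF cls_vs(3) cls_aff(3,6) cls_id] by blast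
  qed
  moreover have "inv_pres \<phi>Y F" if "F \<in> CYZ" and "func_equiv \<phi>Y \<phi>P F" for F
    using inv_pres_if_func_equiv[OF F_diff[OF that(1)] that(2) aeq(8,5)] .
  ultimately show ?thesis by blast
qed

end
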